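(* Assume (A1), (A2), (A4), and suppose $m_1=M>1$ and $m_2=\dots=m_K=m<1$. Let $p:=\sum_{j=2}^K d_{1j}$. Let the random disperser start at $X_0=1$, let $\sigma:=\inf\{n\ge0: X_n\neq 1\}$ and $S:=\inf\{n\ge0: X_{\sigma+n}=1\}$, and define $e:=\mathbb E(m^S)=\sum_{k\ge1}m^k\,\mathbb P(S=k)$. Then, starting from one individual in patch $1$, the population persists with positive probability if and only if $$ M(1-p)+eMp>1. $$
   Context: Model: $K\ge2$ patches, stochastic dispersal matrix $D=(d_{ij})$; at each generation every individual in patch $i$ independently produces a random number of offspring distributed as $N_i$ with mean $m_i$, and each offspring independently moves from patch $i$ to patch $j$ with probability $d_{ij}$. "Persists with positive probability" means the total population is nonzero at all generations with positive probability. The random disperser $(X_n)$ is the Markov chain with transition matrix $D$. Assumptions: (A1) $\mathbb P(N_1=1)<1$; (A2) $\mathbb E(N_i)<\infty$ for all $i$; (A4) $D$ is irreducible. *)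

theory Defs
  imports "HOL-Probability.Probability"
begin

fun iid_sum :: "nat \<Rightarrow> ('k \<Rightarrow> nat) pmf \<Rightarrow> ('k \<Rightarrow> nat) pmf" where
  "iid_sum 0 p = return_pmf (\<lambda>_. 0)"
| "iid_sum (Suc n) p = bind_pmf p (\<lambda>x. map_pmf (\<lambda>y k. x k + y k) (iid_sum n p))"

definition unit_vec :: "'k \<Rightarrow> 'k \<Rightarrow> nat" where
  "unit_vec j = (\<lambda>k. if k = j then 1 else 0)"

text \<open>Vector of offspring counts (by destination patch) of one individual in patch i:
  N i offspring, each dispersing independently according to Disp i (d_ij = pmf (Disp i) j).\<close>
definition offspring_vec :: "('k \<Rightarrow> nat pmf) \<Rightarrow> ('k \<Rightarrow> 'k pmf) \<Rightarrow> 'k \<Rightarrow> ('k \<Rightarrow> nat) pmf" where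
  "offspring_vec N Disp i = bind_pmf (N i) (\<lambda>n. iid_sum n (map_pmf unit_vec (Disp i)))"

definition bp_step :: "('k::finite \<Rightarrow> nat pmf) \<Rightarrow> ('k \<Rightarrow> 'k pmf) \<Rightarrow> ('k \<Rightarrow> nat) \<Rightarrow> ('k \<Rightarrow> nat) pmf" where
  "bp_step N Disp z = map_pmf (\<lambda>f j. \<Sum>i\<in>UNIV. f i j)
      (Pi_pmf UNIV (\<lambda>_. 0) (\<lambda>i. iid_sum (z i) (offspring_vec N Disp i)))"

text \<open>Path space of the population process (random mapping representation of the Markov chain).\<close>
definition bp_space :: "('k::finite \<Rightarrow> nat pmf) \<Rightarrow> ('k \<Rightarrow> 'k pmf)
    \<Rightarrow> (nat \<Rightarrow> ('k \<Rightarrow> nat) \<Rightarrow> ('k \<Rightarrow> nat)) measure" where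
  "bp_space N Disp = PiM UNIV (\<lambda>n. PiM UNIV (\<lambda>z. measure_pmf (bp_step N Disp z)))"

fun bp_path :: "('k \<Rightarrow> nat) \<Rightarrow> (nat \<Rightarrow> ('k \<Rightarrow> nat) \<Rightarrow> ('k \<Rightarrow> nat)) \<Rightarrow> nat \<Rightarrow> ('k \<Rightarrow> nat)" where
  "bp_path z0 \<omega> 0 = z0"
| "bp_path z0 \<omega> (Suc n) = \<omega> n (bp_path z0 \<omega> n)"

definition persist_prob :: "('k::finite \<Rightarrow> nat pmf) \<Rightarrow> ('k \<Rightarrow> 'k pmf) \<Rightarrow> ('k \<Rightarrow> nat) \<Rightarrow> real" where
  "persist_prob N Disp z0 = measure (bp_space N Disp)
     {\<omega> \<in> space (bp_space N Disp). \<forall>n. (\<Sum>k\<in>UNIV. bp_path z0 \<omega> n k) \<noteq> 0}"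

definition rd_space :: "('k::finite \<Rightarrow> 'k pmf) \<Rightarrow> (nat \<Rightarrow> 'k \<Rightarrow> 'k) measure" where
  "rd_space Disp = PiM UNIV (\<lambda>n. measure_pmf (Pi_pmf UNIV undefined Disp))"

fun rd_path :: "'k \<Rightarrow> (nat \<Rightarrow> 'k \<Rightarrow> 'k) \<Rightarrow> nat \<Rightarrow> 'k" where
  "rd_path x0 \<omega> 0 = x0"
| "rd_path x0 \<omega> (Suc n) = \<omega> n (rd_path x0 \<omega> n)"

text \<open>P(S = k) for X_0 = i0, sigma = first exit time from i0, S = time after sigma until
  first return to i0.\<close>
definition return_prob :: "('k::finite \<Rightarrow> 'k pmf) \<Rightarrow> 'k \<Rightarrow> nat \<Rightarrow> real" where
  "return_prob Disp i0 k = measure (rd_space Disp)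
     {\<omega> \<in> space (rd_space Disp). \<exists>s. rd_path i0 \<omega> s \<noteq> i0 \<and> (\<forall>t<s. rd_path i0 \<omega> t = i0)
         \<and> rd_path i0 \<omega> (s + k) = i0 \<and> (\<forall>t<k. rd_path i0 \<omega> (s + t) \<noteq> i0)}"

end

theory Submission
  imports Defs
begin

text \<open>Let q be the extinction probability vector, the least fixed point in [0,1]^K of
  F(s)_i = f_i((D s)_i), where f_i is the offspring generating function in patch i, and let
  h_\<mu>(j) = E_j(\<mu>^\<tau>) for the hitting time \<tau> of patch i0 by the random disperser. A first-step
  analysis of the disperser gives (D h_m)(i0) = (1 - p) + e p, so the criterion reads
  M (D h_m)(i0) > 1.

  If q(i0) < 1, then t = 1 - q satisfies t_j \<le> m (D t)_j away from i0, which forces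
  t \<le> t(i0) h_m, while strict convexity of f_i0 gives t(i0) < M (D t)(i0) \<le> M t(i0) (D h_m)(i0).
  Conversely, if M (D h_m)(i0) > 1, then by continuity M (D h_\<mu>)(i0) > 1 for some \<mu> < m, and
  for small \<epsilon> the vector s = 1 - \<epsilon> h_\<mu> satisfies F s \<le> s and s(i0) < 1; hence q(i0) \<le> s(i0) < 1.\<close>

section \<open>Dispersal averages and probability generating functions\<close>

definition disp_avg :: "('k::finite \<Rightarrow> 'k pmf) \<Rightarrow> ('k \<Rightarrow> real) \<Rightarrow> 'k \<Rightarrow> real" where
  "disp_avg Disp u i = (\<Sum>j\<in>UNIV. pmf (Disp i) j * u j)"

lemma disp_avg_nonneg: "(\<And>j. 0 \<le> u j) \<Longrightarrow> 0 \<le> disp_avg Disp u i"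
  unfolding disp_avg_def by (intro sum_nonneg mult_nonneg_nonneg) auto

lemma disp_avg_mono: "(\<And>j. u j \<le> v j) \<Longrightarrow> disp_avg Disp u i \<le> disp_avg Disp v i"
  unfolding disp_avg_def by (intro sum_mono mult_left_mono) auto

lemma disp_avg_const [simp]: "disp_avg Disp (\<lambda>_. c) i = c"
  unfolding disp_avg_def by (simp add: sum_distrib_right[symmetric] sum_pmf_eq_1)

lemma disp_avg_le_1: "(\<And>j. u j \<le> 1) \<Longrightarrow> disp_avg Disp u i \<le> 1"
  using disp_avg_mono[of u "\<lambda>_. 1" Disp i] by simp

lemma disp_avg_affine: "disp_avg Disp (\<lambda>j. a + b * u j) i = a + b * disp_avg Disp u i"
proof -
  have "disp_avg Disp (\<lambda>j. a + b * u j) i = a * (\<Sum>j\<in>UNIV. pmf (Disp i) j) + b * disp_avg Disp u i"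
    unfolding disp_avg_def by (simp add: algebra_simps sum.distrib sum_distrib_left)
  then show ?thesis by (simp add: sum_pmf_eq_1)
qed

lemma disp_avg_cmult: "disp_avg Disp (\<lambda>j. c * u j) i = c * disp_avg Disp u i"
  using disp_avg_affine[of Disp 0 c u i] by simp

lemma disp_avg_remove:
  "disp_avg Disp u i = pmf (Disp i) i0 * u i0 + (\<Sum>j\<in>UNIV - {i0}. pmf (Disp i) j * u j)"
  unfolding disp_avg_def by (rule sum.remove) auto

lemma pmf_eq_1_minus_sum_others: "pmf D x = 1 - (\<Sum>y\<in>UNIV - {x}. pmf D (y::'k::finite))"
  using disp_avg_remove[of "\<lambda>_. D" "\<lambda>_. 1" x x] by simp

lemma tendsto_disp_avg:
  "(\<And>j. (\<lambda>n. X n j) \<longlonglongrightarrow> u j) \<Longrightarrow> (\<lambda>n. disp_avg Disp (X n) i) \<longlonglongrightarrow> disp_avg Disp u i"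
  unfolding disp_avg_def by (intro tendsto_intros)

definition pgf :: "nat pmf \<Rightarrow> real \<Rightarrow> real" where
  "pgf Q x = measure_pmf.expectation Q (\<lambda>n. x ^ n)"

lemma integrable_power_pmf:
  "0 \<le> (x::real) \<Longrightarrow> x \<le> 1 \<Longrightarrow> integrable (measure_pmf Q) (\<lambda>n. x ^ n)"
  by (rule measure_pmf.integrable_const_bound[where B=1]) (auto simp: power_le_one)

lemma pgf_nonneg: "0 \<le> x \<Longrightarrow> 0 \<le> pgf Q x"
  unfolding pgf_def by (intro integral_nonneg_AE AE_I2) auto

lemma pgf_le_1: "0 \<le> x \<Longrightarrow> x \<le> 1 \<Longrightarrow> pgf Q x \<le> 1"
  unfolding pgf_def
  by (intro measure_pmf.integral_le_const integrable_power_pmf AE_I2) (auto simp: power_le_one)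

lemma pgf_1 [simp]: "pgf Q 1 = 1"
  by (simp add: pgf_def)

lemma pgf_mono: "0 \<le> x \<Longrightarrow> x \<le> y \<Longrightarrow> y \<le> 1 \<Longrightarrow> pgf Q x \<le> pgf Q y"
  unfolding pgf_def by (intro integral_mono integrable_power_pmf power_mono) auto

lemma tendsto_pgf:
  assumes "\<And>n. 0 \<le> X n" "\<And>n. X n \<le> 1" and "X \<longlonglongrightarrow> x"
  shows "(\<lambda>n. pgf Q (X n)) \<longlonglongrightarrow> pgf Q x"
  unfolding pgf_def
proof (rule integral_dominated_convergence[where w="\<lambda>_. 1"])
  show "AE k in measure_pmf Q. (\<lambda>n. X n ^ k) \<longlonglongrightarrow> x ^ k"
    using assms(3) by (intro AE_I2 tendsto_power)
  show "AE k in measure_pmf Q. norm (X n ^ k) \<le> 1" for n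
    using assms(1,2) by (intro AE_I2) (simp add: power_le_one)
qed auto

lemma one_minus_pgf_eq:
  "0 \<le> x \<Longrightarrow> x \<le> 1 \<Longrightarrow> 1 - pgf Q x = measure_pmf.expectation Q (\<lambda>n. 1 - x ^ n)"
  unfolding pgf_def by (subst Bochner_Integration.integral_diff) (auto intro!: integrable_power_pmf)

lemma one_minus_power_le: "x \<le> 1 \<Longrightarrow> 1 - (1 - x) ^ n \<le> real n * (x::real)"
  using Bernoulli_inequality[of "- x" n] by simp

lemma one_minus_pgf_le:
  assumes Q: "integrable (measure_pmf Q) real" and "0 \<le> x" "x \<le> 1"
  shows "1 - pgf Q (1 - x) \<le> measure_pmf.expectation Q real * x"
proof -
  have "1 - pgf Q (1 - x) = measure_pmf.expectation Q (\<lambda>n. 1 - (1 - x) ^ n)"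
    using assms by (intro one_minus_pgf_eq) auto
  also have "\<dots> \<le> measure_pmf.expectation Q (\<lambda>n. real n * x)"
    using one_minus_power_le assms
    by (intro integral_mono Bochner_Integration.integrable_diff integrable_mult_left integrable_power_pmf Q)
       auto
  finally show ?thesis by simp
qed

lemma Bernoulli_inequality_strict:
  fixes x :: real
  assumes "0 < x" "x \<le> 1" "2 \<le> n"
  shows "1 - real n * x < (1 - x) ^ n"
proof -
  obtain k where n: "n = Suc k" and "1 \<le> k" using assms(3) by (cases n) auto
  have "1 - real n * x < (1 - real k * x) * (1 - x)"
    using \<open>1 \<le> k\<close> assms(1) by (simp add: n algebra_simps)
  also have "\<dots> \<le> (1 - x) ^ k * (1 - x)"
    using one_minus_power_le[of x k] assms by (intro mult_right_mono) auto
  finally show ?thesis by (simp add: n mult.commute)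
qed

lemma one_minus_pgf_less:
  assumes Q: "integrable (measure_pmf Q) real" and EQ: "measure_pmf.expectation Q real > 1"
    and "0 < x" "x \<le> 1"
  shows "1 - pgf Q (1 - x) < measure_pmf.expectation Q real * x"
proof -
  have "emeasure (measure_pmf Q) {n. 2 \<le> n} \<noteq> 0"
  proof
    assume "emeasure (measure_pmf Q) {n. 2 \<le> n} = 0"
    then have "AE n in measure_pmf Q. real n \<le> 1"
      by (intro AE_I'[of "{n. 2 \<le> n}"]) auto
    then have "measure_pmf.expectation Q real \<le> measure_pmf.expectation Q (\<lambda>_. 1)"
      by (intro integral_mono_AE Q) auto
    then show False using EQ by simp
  qed
  then have "measure_pmf.expectation Q (\<lambda>n. 1 - (1 - x) ^ n) < measure_pmf.expectation Q (\<lambda>n. real n * x)"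
    using Bernoulli_inequality_strict[OF assms(3,4)] one_minus_power_le assms(3,4)
    by (intro measure_pmf.integral_less_AE[where A="{n. 2 \<le> n}"] AE_I2
        Bochner_Integration.integrable_diff integrable_mult_left integrable_power_pmf Q) force+
  then show ?thesis using assms by (simp add: one_minus_pgf_eq)
qed

text \<open>Since 1 - (1 - x)^n = x \<Sum>i<n. (1 - x)^i, the quotient (1 - pgf Q (1 - x)) / x is an
  expectation that tends to E Q as x \<rightarrow> 0+, by dominated convergence.\<close>

lemma eventually_one_minus_pgf_ge:
  assumes Q: "integrable (measure_pmf Q) real" and c: "c < measure_pmf.expectation Q real"
  shows "\<forall>\<^sub>F x in at_right 0. c * x \<le> 1 - pgf Q (1 - x)"
proof -
  define g where "g x n = (\<Sum>i<n. (1 - x) ^ i)" for x :: real and n :: nat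
  have "\<forall>\<^sub>F x in at_right 0. c < measure_pmf.expectation Q (g x)"
  proof (rule sequentially_imp_eventually_at_right[OF zero_less_one])
    fix f :: "nat \<Rightarrow> real" assume f: "\<And>k. 0 < f k" "\<And>k. f k < 1" "f \<longlonglongrightarrow> 0"
    have "(\<lambda>k. measure_pmf.expectation Q (g (f k))) \<longlonglongrightarrow> measure_pmf.expectation Q real"
    proof (rule integral_dominated_convergence[where w=real])
      show "AE n in measure_pmf Q. (\<lambda>k. g (f k) n) \<longlonglongrightarrow> real n"
      proof (rule AE_I2)
        fix n
        have "(\<lambda>k. \<Sum>i<n. (1 - f k) ^ i) \<longlonglongrightarrow> (\<Sum>i<n. (1 - 0) ^ i)"
          using f(3) by (intro tendsto_intros)
        then show "(\<lambda>k. g (f k) n) \<longlonglongrightarrow> real n" by (simp add: g_def)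
      qed
      show "AE n in measure_pmf Q. norm (g (f k) n) \<le> real n" for k
      proof (rule AE_I2)
        fix n
        have "0 \<le> g (f k) n"
          unfolding g_def using f(2)[of k] by (auto intro!: sum_nonneg)
        moreover have "g (f k) n \<le> (\<Sum>i<n. 1)"
          unfolding g_def using f(1,2)[of k] by (intro sum_mono power_le_one) auto
        ultimately show "norm (g (f k) n) \<le> real n" by simp
      qed
    qed (use Q in auto)
    then show "\<forall>\<^sub>F k in sequentially. c < measure_pmf.expectation Q (g (f k))"
      using c by (rule order_tendstoD(1))
  qed
  moreover have "\<forall>\<^sub>F x in at_right 0. 0 < x \<and> x < (1::real)"
    by (auto simp: eventually_at_right_field intro!: exI[of _ 1])
  ultimately show ?thesis
  proof eventually_elim
    case (elim x)
    have "1 - pgf Q (1 - x) = measure_pmf.expectation Q (\<lambda>n. x * g x n)"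
      using elim by (simp add: one_minus_pgf_eq one_diff_power_eq g_def)
    also have "\<dots> = x * measure_pmf.expectation Q (g x)"
      by simp
    finally show ?case using elim by (simp add: mult.commute)
  qed
qed

section \<open>The offspring generating function and extinction\<close>

definition offspring_gf :: "('k::finite \<Rightarrow> nat pmf) \<Rightarrow> ('k \<Rightarrow> 'k pmf) \<Rightarrow> ('k \<Rightarrow> real) \<Rightarrow> 'k \<Rightarrow> real" where
  "offspring_gf N Disp u i = pgf (N i) (disp_avg Disp u i)"

lemma offspring_gf_nonneg: "(\<And>j. 0 \<le> u j) \<Longrightarrow> 0 \<le> offspring_gf N Disp u i"
  unfolding offspring_gf_def by (intro pgf_nonneg disp_avg_nonneg)

lemma offspring_gf_le_1: "(\<And>j. 0 \<le> u j) \<Longrightarrow> (\<And>j. u j \<le> 1) \<Longrightarrow> offspring_gf N Disp u i \<le> 1"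
  unfolding offspring_gf_def by (intro pgf_le_1 disp_avg_nonneg disp_avg_le_1)

lemma offspring_gf_mono:
  assumes "\<And>j. 0 \<le> u j" "\<And>j. u j \<le> v j" "\<And>j. v j \<le> 1"
  shows "offspring_gf N Disp u i \<le> offspring_gf N Disp v i"
  unfolding offspring_gf_def using assms
  by (intro pgf_mono disp_avg_nonneg disp_avg_mono disp_avg_le_1) auto

lemma offspring_gf_iter_bounds:
  assumes "\<And>j. 0 \<le> u j" "\<And>j. u j \<le> 1"
  shows "0 \<le> (offspring_gf N Disp ^^ n) u i \<and> (offspring_gf N Disp ^^ n) u i \<le> 1"
proof (induction n arbitrary: i)
  case (Suc n)
  then show ?case by (auto intro: offspring_gf_nonneg offspring_gf_le_1)
qed (use assms in auto)

lemma tendsto_offspring_gf: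
  assumes "\<And>n j. 0 \<le> X n j" "\<And>n j. X n j \<le> 1" "\<And>j. (\<lambda>n. X n j) \<longlonglongrightarrow> u j"
  shows "(\<lambda>n. offspring_gf N Disp (X n) i) \<longlonglongrightarrow> offspring_gf N Disp u i"
  unfolding offspring_gf_def using assms
  by (intro tendsto_pgf tendsto_disp_avg disp_avg_nonneg disp_avg_le_1) auto

definition extinction_prob :: "('k::finite \<Rightarrow> nat pmf) \<Rightarrow> ('k \<Rightarrow> 'k pmf) \<Rightarrow> 'k \<Rightarrow> real" where
  "extinction_prob N Disp i = (SUP n. (offspring_gf N Disp ^^ n) (\<lambda>_. 0) i)"

lemma incseq_offspring_gf_iter: "incseq (\<lambda>n. (offspring_gf N Disp ^^ n) (\<lambda>_. 0) i)"
proof -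
  have "(offspring_gf N Disp ^^ n) (\<lambda>_. 0) i \<le> (offspring_gf N Disp ^^ Suc n) (\<lambda>_. 0) i" for n
  proof (induction n arbitrary: i)
    case 0
    then show ?case by (simp add: offspring_gf_nonneg)
  next
    case (Suc n)
    have "offspring_gf N Disp ((offspring_gf N Disp ^^ n) (\<lambda>_. 0)) i
        \<le> offspring_gf N Disp ((offspring_gf N Disp ^^ Suc n) (\<lambda>_. 0)) i"
      using Suc offspring_gf_iter_bounds[where u="\<lambda>_. 0" and N=N and Disp=Disp and n=n]
        offspring_gf_iter_bounds[where u="\<lambda>_. 0" and N=N and Disp=Disp and n="Suc n"]
      by (intro offspring_gf_mono) auto
    then show ?case by simp
  qed
  then show ?thesis by (rule incseq_SucI)
qed

lemma tendsto_extinction_prob: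
  "(\<lambda>n. (offspring_gf N Disp ^^ n) (\<lambda>_. 0) i) \<longlonglongrightarrow> extinction_prob N Disp i"
  unfolding extinction_prob_def
  using offspring_gf_iter_bounds[where u="\<lambda>_. 0" and N=N and Disp=Disp]
  by (intro LIMSEQ_incseq_SUP incseq_offspring_gf_iter) (auto intro!: bdd_aboveI[where M=1])

lemma extinction_prob_bounds: "0 \<le> extinction_prob N Disp i" "extinction_prob N Disp i \<le> 1"
  using offspring_gf_iter_bounds[where u="\<lambda>_. 0" and N=N and Disp=Disp]
  by (auto intro: LIMSEQ_le_const[OF tendsto_extinction_prob] LIMSEQ_le_const2[OF tendsto_extinction_prob])

lemma offspring_gf_extinction_prob:
  "offspring_gf N Disp (extinction_prob N Disp) i = extinction_prob N Disp i"
proof -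
  let ?u = "\<lambda>n. (offspring_gf N Disp ^^ n) (\<lambda>_. 0)"
  have "(\<lambda>n. offspring_gf N Disp (?u n) i) \<longlonglongrightarrow> offspring_gf N Disp (extinction_prob N Disp) i"
    using offspring_gf_iter_bounds[where u="\<lambda>_. 0" and N=N and Disp=Disp]
    by (intro tendsto_offspring_gf tendsto_extinction_prob) auto
  moreover have "(\<lambda>n. offspring_gf N Disp (?u n) i) \<longlonglongrightarrow> extinction_prob N Disp i"
    using LIMSEQ_Suc[OF tendsto_extinction_prob[of N Disp i]] by simp
  ultimately show ?thesis by (rule LIMSEQ_unique)
qed

lemma extinction_prob_le:
  assumes "\<And>j. 0 \<le> s j" "\<And>j. s j \<le> 1" "\<And>j. offspring_gf N Disp s j \<le> s j"
  shows "extinction_prob N Disp i \<le> s i"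
proof -
  have "(offspring_gf N Disp ^^ n) (\<lambda>_. 0) j \<le> s j" for n j
  proof (induction n arbitrary: j)
    case (Suc n)
    have "offspring_gf N Disp ((offspring_gf N Disp ^^ n) (\<lambda>_. 0)) j \<le> offspring_gf N Disp s j"
      using Suc assms offspring_gf_iter_bounds[where u="\<lambda>_. 0" and N=N and Disp=Disp]
      by (intro offspring_gf_mono) auto
    then show ?case using assms(3)[of j] by simp
  qed (use assms in simp)
  then show ?thesis unfolding extinction_prob_def by (intro cSUP_least) auto
qed

section \<open>Chains driven by i.i.d. random maps\<close>

text \<open>Both the random disperser and, by bp_path_eq_rd_path, the population process iterate
  i.i.d. random maps, so their first-step decomposition is proved once for rd_path.\<close>

lemma rd_path_Suc_shift: "rd_path y \<omega> (Suc t) = rd_path (\<omega> 0 y) (\<lambda>n. \<omega> (Suc n)) t"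
  by (induction t) auto

lemma rd_path_case_nat: "rd_path y (case_nat s \<omega>) = case_nat y (rd_path (s y) \<omega>)"
proof
  fix t show "rd_path y (case_nat s \<omega>) t = case_nat y (rd_path (s y) \<omega>) t"
    by (cases t) (simp_all add: rd_path_Suc_shift del: rd_path.simps(2))
qed

lemma measurable_rd_path:
  fixes B :: "('a::countable \<Rightarrow> 'a) measure"
  assumes eval: "\<And>a. (\<lambda>s. s a) \<in> measurable B (count_space UNIV)"
  shows "(\<lambda>\<omega>. rd_path y \<omega> t) \<in> measurable (PiM UNIV (\<lambda>_::nat. B)) (count_space UNIV)"
proof (induction t)
  case (Suc t)
  have "(\<lambda>\<omega>. (\<lambda>i \<omega>. \<omega> t i) (rd_path y \<omega> t) \<omega>) \<in> measurable (PiM UNIV (\<lambda>_::nat. B)) (count_space UNIV)"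
  proof (rule measurable_compose_countable'[OF _ Suc])
    fix i :: 'a
    show "(\<lambda>\<omega>. \<omega> t i) \<in> measurable (PiM UNIV (\<lambda>_::nat. B)) (count_space UNIV)"
      using measurable_compose[OF measurable_component_singleton[of t UNIV "\<lambda>_. B"] eval[of i]] by simp
  qed simp
  then show ?case by simp
qed simp

lemma measurable_rd_path_PiM:
  fixes B :: "('a::countable \<Rightarrow> 'a) measure"
  assumes "\<And>a. (\<lambda>s. s a) \<in> measurable B (count_space UNIV)"
  shows "rd_path y \<in> measurable (PiM UNIV (\<lambda>_::nat. B)) (PiM UNIV (\<lambda>_::nat. count_space UNIV))"
  using measurable_rd_path[OF assms] by (intro measurable_PiM_single') (auto simp: space_PiM)

lemma nn_integral_rd_path_first_step:
  fixes B :: "('a::countable \<Rightarrow> 'a) measure"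
  assumes B: "prob_space B" and eval: "\<And>a. (\<lambda>s. s a) \<in> measurable B (count_space UNIV)"
    and f: "f \<in> borel_measurable (PiM UNIV (\<lambda>_::nat. count_space (UNIV::'a set)))"
  shows "(\<integral>\<^sup>+\<omega>. f (rd_path y \<omega>) \<partial>PiM UNIV (\<lambda>_::nat. B))
       = (\<integral>\<^sup>+s. \<integral>\<^sup>+\<omega>. f (case_nat y (rd_path (s y) \<omega>)) \<partial>PiM UNIV (\<lambda>_::nat. B) \<partial>B)"
proof -
  interpret sequence_space B
    unfolding sequence_space_def product_prob_space_def product_prob_space_axioms_def product_sigma_finite_def
    using B by (auto intro: prob_space_imp_sigma_finite)
  have fm: "(\<lambda>\<omega>. f (rd_path y \<omega>)) \<in> borel_measurable S"
    using measurable_comp[OF measurable_rd_path_PiM[OF eval] f] by (simp add: comp_def)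
  have cm: "(\<lambda>(s, \<omega>). case_nat s \<omega>) \<in> measurable (B \<Otimes>\<^sub>M S) S"
    by measurable
  have "(\<integral>\<^sup>+\<omega>. f (rd_path y \<omega>) \<partial>S)
      = (\<integral>\<^sup>+\<omega>. f (rd_path y \<omega>) \<partial>distr (B \<Otimes>\<^sub>M S) S (\<lambda>(s, \<omega>). case_nat s \<omega>))"
    by (simp add: PiM_iter)
  also have "\<dots> = (\<integral>\<^sup>+x. f (rd_path y (case_prod case_nat x)) \<partial>(B \<Otimes>\<^sub>M S))"
    by (rule nn_integral_distr[OF cm]) (use fm in simp)
  also have "\<dots> = (\<integral>\<^sup>+s. \<integral>\<^sup>+\<omega>. f (rd_path y (case_nat s \<omega>)) \<partial>S \<partial>B)"
  proof (subst P.nn_integral_fst[symmetric])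
    show "(\<lambda>x. f (rd_path y (case_prod case_nat x))) \<in> borel_measurable (B \<Otimes>\<^sub>M S)"
      using measurable_comp[OF cm fm] by (simp add: comp_def split_beta')
  qed simp
  finally show ?thesis by (simp add: rd_path_case_nat)
qed

section \<open>The branching process\<close>

definition prod_pow :: "('k::finite \<Rightarrow> real) \<Rightarrow> ('k \<Rightarrow> nat) \<Rightarrow> real" where
  "prod_pow u y = (\<Prod>i\<in>UNIV. u i ^ y i)"

lemma prod_pow_nonneg: "(\<And>i. 0 \<le> u i) \<Longrightarrow> 0 \<le> prod_pow u y"
  by (auto simp: prod_pow_def intro!: prod_nonneg)

lemma prod_pow_add: "prod_pow u (\<lambda>k. x k + y k) = prod_pow u x * prod_pow u y"
  by (simp add: prod_pow_def power_add prod.distrib)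

lemma prod_pow_sum: "prod_pow u (\<lambda>j. \<Sum>i\<in>UNIV. f i j) = (\<Prod>i\<in>UNIV. prod_pow u (f i))"
proof -
  have "prod_pow u (\<lambda>j. \<Sum>i\<in>UNIV. f i j) = (\<Prod>j\<in>UNIV. \<Prod>i\<in>UNIV. u j ^ f i j)"
    unfolding prod_pow_def by (simp only: power_sum)
  also have "\<dots> = (\<Prod>i\<in>UNIV. \<Prod>j\<in>UNIV. u j ^ f i j)"
    by (rule prod.swap)
  finally show ?thesis unfolding prod_pow_def .
qed

lemma prod_pow_unit_vec [simp]: "prod_pow u (unit_vec j) = u j"
proof -
  have "prod_pow u (unit_vec j) = (\<Prod>i\<in>UNIV. if i = j then u i else 1)"
    unfolding prod_pow_def unit_vec_def by (intro prod.cong) auto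
  then show ?thesis by simp
qed

lemma prod_pow_zero: "prod_pow (\<lambda>_. 0) y = (if y = (\<lambda>_. 0) then 1 else 0)"
proof (cases "y = (\<lambda>_. 0)")
  case False
  then obtain i where "y i \<noteq> 0" by auto
  then show ?thesis unfolding prod_pow_def by (auto intro!: prod_zero)
qed (simp add: prod_pow_def)

lemma nn_integral_prod_pow_iid_sum:
  assumes "\<And>i. 0 \<le> u i"
  shows "(\<integral>\<^sup>+y. prod_pow u y \<partial>iid_sum n Q) = (\<integral>\<^sup>+y. prod_pow u y \<partial>Q) ^ n"
proof (induction n)
  case (Suc n)
  have "(\<integral>\<^sup>+y. prod_pow u y \<partial>iid_sum (Suc n) Q)
      = (\<integral>\<^sup>+x. \<integral>\<^sup>+y. ennreal (prod_pow u x) * ennreal (prod_pow u y) \<partial>iid_sum n Q \<partial>Q)"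
    by (simp add: prod_pow_add ennreal_mult prod_pow_nonneg assms)
  also have "\<dots> = (\<integral>\<^sup>+x. prod_pow u x \<partial>Q) * (\<integral>\<^sup>+y. prod_pow u y \<partial>iid_sum n Q)"
    by (simp add: nn_integral_cmult nn_integral_multc)
  finally show ?case using Suc by (simp add: mult.commute)
qed (simp add: prod_pow_def)

lemma nn_integral_prod_pow_offspring_vec:
  assumes "\<And>i. 0 \<le> u i" "\<And>i. u i \<le> 1"
  shows "(\<integral>\<^sup>+y. prod_pow u y \<partial>offspring_vec N Disp i) = offspring_gf N Disp u i"
proof -
  have avg: "0 \<le> disp_avg Disp u i" "disp_avg Disp u i \<le> 1"
    using assms by (auto intro: disp_avg_nonneg disp_avg_le_1)
  have "(\<integral>\<^sup>+y. prod_pow u y \<partial>map_pmf unit_vec (Disp i)) = (\<integral>\<^sup>+j. u j \<partial>Disp i)"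
    by simp
  also have "\<dots> = disp_avg Disp u i"
    using assms by (simp add: nn_integral_measure_pmf nn_integral_count_space_finite disp_avg_def
        sum_ennreal[symmetric] ennreal_mult)
  finally have "(\<integral>\<^sup>+y. prod_pow u y \<partial>offspring_vec N Disp i)
      = (\<integral>\<^sup>+n. ennreal (disp_avg Disp u i ^ n) \<partial>N i)"
    unfolding offspring_vec_def using assms avg by (simp add: nn_integral_prod_pow_iid_sum ennreal_power)
  also have "\<dots> = offspring_gf N Disp u i"
    unfolding offspring_gf_def pgf_def using avg
    by (intro nn_integral_eq_integral integrable_power_pmf AE_I2) auto
  finally show ?thesis .
qed

lemma nn_integral_prod_pow_bp_step:
  assumes "\<And>i. 0 \<le> u i" "\<And>i. u i \<le> 1"
  shows "(\<integral>\<^sup>+y. prod_pow u y \<partial>bp_step N Disp z) = prod_pow (offspring_gf N Disp u) z"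
proof -
  have "(\<integral>\<^sup>+y. prod_pow u y \<partial>bp_step N Disp z)
     = (\<integral>\<^sup>+f. (\<Prod>i\<in>UNIV. ennreal (prod_pow u (f i)))
          \<partial>Pi_pmf UNIV (\<lambda>_. 0) (\<lambda>i. iid_sum (z i) (offspring_vec N Disp i)))"
    unfolding bp_step_def nn_integral_map_pmf prod_pow_sum
    using assms by (intro nn_integral_cong prod_ennreal[symmetric] prod_pow_nonneg)
  also have "\<dots> = (\<Prod>i\<in>UNIV. \<integral>\<^sup>+y. prod_pow u y \<partial>iid_sum (z i) (offspring_vec N Disp i))"
    by (rule nn_integral_prod_Pi_pmf) simp
  also have "\<dots> = (\<Prod>i\<in>UNIV. ennreal (offspring_gf N Disp u i) ^ z i)"
    using assms by (simp add: nn_integral_prod_pow_iid_sum nn_integral_prod_pow_offspring_vec)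
  also have "\<dots> = prod_pow (offspring_gf N Disp u) z"
    unfolding prod_pow_def using assms
    by (simp add: ennreal_power prod_ennreal prod_nonneg offspring_gf_nonneg)
  finally show ?thesis .
qed

abbreviation bp_maps :: "('k::finite \<Rightarrow> nat pmf) \<Rightarrow> ('k \<Rightarrow> 'k pmf) \<Rightarrow> (('k \<Rightarrow> nat) \<Rightarrow> ('k \<Rightarrow> nat)) measure" where
  "bp_maps N Disp \<equiv> PiM UNIV (\<lambda>z. measure_pmf (bp_step N Disp z))"

lemma prob_space_bp_maps: "prob_space (bp_maps N Disp)"
  by (rule prob_space_PiM) (simp add: prob_space_measure_pmf)

lemma prob_space_bp_space: "prob_space (bp_space N Disp)"
  unfolding bp_space_def by (rule prob_space_PiM) (rule prob_space_bp_maps)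

lemma measurable_bp_maps_eval: "(\<lambda>s. s z) \<in> measurable (bp_maps N Disp) (count_space UNIV)"
proof -
  have "(\<lambda>s. s z) \<in> measurable (bp_maps N Disp) (measure_pmf (bp_step N Disp z))"
    by (rule measurable_component_singleton) simp
  then show ?thesis by (simp add: measurable_cong_sets)
qed

lemma nn_integral_bp_maps_eval:
  "(\<integral>\<^sup>+s. g (s z) \<partial>bp_maps N Disp) = (\<integral>\<^sup>+y. g y \<partial>bp_step N Disp z)"
proof -
  interpret product_prob_space "\<lambda>z. measure_pmf (bp_step N Disp z)" UNIV
    unfolding product_prob_space_def product_prob_space_axioms_def product_sigma_finite_def
    by (auto intro: prob_space_imp_sigma_finite simp: prob_space_measure_pmf)
  have "(\<integral>\<^sup>+y. g y \<partial>bp_step N Disp z) = (\<integral>\<^sup>+y. g y \<partial>distr (bp_maps N Disp) (bp_step N Disp z) (\<lambda>s. s z))"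
    by (simp add: PiM_component)
  also have "\<dots> = (\<integral>\<^sup>+s. g (s z) \<partial>bp_maps N Disp)"
    by (rule nn_integral_distr) auto
  finally show ?thesis ..
qed

lemma bp_path_eq_rd_path: "bp_path z \<omega> n = rd_path z \<omega> n"
  by (induction n) auto

lemma measurable_bp_path: "(\<lambda>\<omega>. bp_path z \<omega> n) \<in> measurable (bp_space N Disp) (count_space UNIV)"
  unfolding bp_space_def bp_path_eq_rd_path by (rule measurable_rd_path[OF measurable_bp_maps_eval])

lemma nn_integral_bp_path_Suc:
  fixes h :: "('k::finite \<Rightarrow> nat) \<Rightarrow> ennreal"
  shows "(\<integral>\<^sup>+\<omega>. h (bp_path z \<omega> (Suc n)) \<partial>bp_space N Disp)
     = (\<integral>\<^sup>+y. \<integral>\<^sup>+\<omega>. h (bp_path y \<omega> n) \<partial>bp_space N Disp \<partial>bp_step N Disp z)"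
proof -
  have "(\<lambda>x. h (x (Suc n))) \<in> borel_measurable (PiM UNIV (\<lambda>_::nat. count_space (UNIV::('k \<Rightarrow> nat) set)))"
    using measurable_component_singleton[of "Suc n" UNIV] by (auto intro: measurable_compose)
  note first_step = nn_integral_rd_path_first_step[OF prob_space_bp_maps measurable_bp_maps_eval this]
  show ?thesis
    unfolding bp_space_def bp_path_eq_rd_path
    by (simp add: first_step del: rd_path.simps) (rule nn_integral_bp_maps_eval)
qed

lemma nn_integral_prod_pow_bp_path:
  assumes "\<And>i. 0 \<le> u i" "\<And>i. u i \<le> 1"
  shows "(\<integral>\<^sup>+\<omega>. prod_pow u (bp_path z \<omega> n) \<partial>bp_space N Disp) = prod_pow ((offspring_gf N Disp ^^ n) u) z"
proof (induction n arbitrary: z)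
  case 0
  interpret prob_space "bp_space N Disp" by (rule prob_space_bp_space)
  show ?case by (simp add: emeasure_space_1)
next
  case (Suc n)
  have "(\<integral>\<^sup>+\<omega>. prod_pow u (bp_path z \<omega> (Suc n)) \<partial>bp_space N Disp)
     = (\<integral>\<^sup>+y. prod_pow ((offspring_gf N Disp ^^ n) u) y \<partial>bp_step N Disp z)"
    using nn_integral_bp_path_Suc[where h="\<lambda>y. ennreal (prod_pow u y)"] Suc by simp
  also have "\<dots> = prod_pow (offspring_gf N Disp ((offspring_gf N Disp ^^ n) u)) z"
    using offspring_gf_iter_bounds[of u, OF assms] by (intro nn_integral_prod_pow_bp_step) auto
  finally show ?case by simp
qed

lemma sets_bp_path_eq_0: "{\<omega> \<in> space (bp_space N Disp). bp_path z \<omega> n = (\<lambda>_. 0)} \<in> sets (bp_space N Disp)"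
  using measurable_bp_path[of z n N Disp] by (simp add: measurable_count_space_eq2)

lemma measure_bp_path_eq_0:
  "measure (bp_space N Disp) {\<omega> \<in> space (bp_space N Disp). bp_path z \<omega> n = (\<lambda>_. 0)}
    = prod_pow ((offspring_gf N Disp ^^ n) (\<lambda>_. 0)) z"
proof -
  let ?A = "{\<omega> \<in> space (bp_space N Disp). bp_path z \<omega> n = (\<lambda>_. 0)}"
  have "emeasure (bp_space N Disp) ?A = (\<integral>\<^sup>+\<omega>. indicator ?A \<omega> \<partial>bp_space N Disp)"
    by (rule nn_integral_indicator[symmetric]) (rule sets_bp_path_eq_0)
  also have "\<dots> = (\<integral>\<^sup>+\<omega>. prod_pow (\<lambda>_. 0) (bp_path z \<omega> n) \<partial>bp_space N Disp)"
    by (rule nn_integral_cong) (simp add: prod_pow_zero indicator_def)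
  also have "\<dots> = prod_pow ((offspring_gf N Disp ^^ n) (\<lambda>_. 0)) z"
    by (rule nn_integral_prod_pow_bp_path) auto
  finally show ?thesis
    using offspring_gf_iter_bounds[where u="\<lambda>_. 0" and N=N and Disp=Disp]
    by (simp add: measure_def prod_pow_nonneg)
qed

lemma AE_bp_space_absorbing: "AE \<omega> in bp_space N Disp. \<forall>n. \<omega> n (\<lambda>_. 0) = (\<lambda>_. 0)"
proof -
  interpret maps: product_prob_space "\<lambda>z. measure_pmf (bp_step N Disp z)" UNIV
    unfolding product_prob_space_def product_prob_space_axioms_def product_sigma_finite_def
    by (auto intro: prob_space_imp_sigma_finite simp: prob_space_measure_pmf)
  interpret paths: product_prob_space "\<lambda>_::nat. bp_maps N Disp" UNIV
    unfolding product_prob_space_def product_prob_space_axioms_def product_sigma_finite_def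
    using prob_space_bp_maps by (auto intro: prob_space_imp_sigma_finite)
  have "bp_step N Disp (\<lambda>_. 0) = return_pmf (\<lambda>_. 0)"
    by (simp add: bp_step_def)
  then have "AE s in bp_maps N Disp. s (\<lambda>_. 0) = (\<lambda>_. 0)"
    by (intro maps.AE_component) (auto simp: AE_measure_pmf_iff)
  then have "AE \<omega> in bp_space N Disp. \<omega> n (\<lambda>_. 0) = (\<lambda>_. 0)" for n
    unfolding bp_space_def by (rule paths.AE_component[rotated]) simp
  then show ?thesis by (simp add: AE_all_countable)
qed

lemma bp_path_stays_0:
  assumes "\<forall>n. \<omega> n (\<lambda>_. 0) = (\<lambda>_. 0)" "bp_path z \<omega> k = (\<lambda>_. 0)" "k \<le> n"
  shows "bp_path z \<omega> n = (\<lambda>_. 0)"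
  using assms(3,2) by (induction n rule: dec_induct) (simp_all add: assms(1))

lemma tendsto_persist_prob:
  fixes z :: "'k::finite \<Rightarrow> nat"
  shows "(\<lambda>n. prod_pow ((offspring_gf N Disp ^^ n) (\<lambda>_. 0)) z) \<longlonglongrightarrow> 1 - persist_prob N Disp z"
proof -
  let ?S = "bp_space N Disp"
  interpret prob_space ?S by (rule prob_space_bp_space)
  define C where "C n = {\<omega> \<in> space ?S. \<exists>k\<le>n. bp_path z \<omega> k = (\<lambda>_. 0)}" for n
  have C_sets: "C n \<in> sets ?S" for n
  proof -
    have "C n = (\<Union>k\<le>n. {\<omega> \<in> space ?S. bp_path z \<omega> k = (\<lambda>_. 0)})"
      unfolding C_def by auto
    then show ?thesis by (auto intro!: sets.finite_UN sets_bp_path_eq_0)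
  qed
  have "measure ?S (C n) = measure ?S {\<omega> \<in> space ?S. bp_path z \<omega> n = (\<lambda>_. 0)}" for n
  proof (rule measure_eq_AE)
    show "AE \<omega> in ?S. (\<omega> \<in> C n) = (\<omega> \<in> {\<omega> \<in> space ?S. bp_path z \<omega> n = (\<lambda>_. 0)})"
      using AE_bp_space_absorbing
      by eventually_elim (auto simp: C_def intro: bp_path_stays_0)
  qed (use C_sets sets_bp_path_eq_0 in auto)
  then have measure_C: "measure ?S (C n) = prod_pow ((offspring_gf N Disp ^^ n) (\<lambda>_. 0)) z" for n
    by (simp add: measure_bp_path_eq_0)
  have total_eq_0_iff: "(\<Sum>k\<in>UNIV. y k) = 0 \<longleftrightarrow> y = (\<lambda>_. 0)" for y :: "'k \<Rightarrow> nat"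
    by (auto simp: fun_eq_iff)
  have "incseq C" unfolding C_def incseq_def by (auto intro: order.trans)
  then have "(\<lambda>n. measure ?S (C n)) \<longlonglongrightarrow> measure ?S (\<Union>n. C n)"
    using C_sets by (intro finite_Lim_measure_incseq) auto
  moreover have "persist_prob N Disp z = measure ?S (space ?S - (\<Union>n. C n))"
    unfolding persist_prob_def C_def by (rule arg_cong[where f="measure ?S"]) (auto simp: total_eq_0_iff)
  then have "persist_prob N Disp z = 1 - measure ?S (\<Union>n. C n)"
    using C_sets by (simp add: prob_compl sets.countable_UN)
  ultimately show ?thesis by (simp add: measure_C)
qed

lemma persist_prob_unit_vec: "persist_prob N Disp (unit_vec i) = 1 - extinction_prob N Disp i"
proof -
  have "(\<lambda>n. (offspring_gf N Disp ^^ n) (\<lambda>_. 0) i) \<longlonglongrightarrow> 1 - persist_prob N Disp (unit_vec i)"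
    using tendsto_persist_prob[of N Disp "unit_vec i"] by simp
  with tendsto_extinction_prob show ?thesis using LIMSEQ_unique by fastforce
qed

section \<open>Hitting times of the random disperser\<close>

lemma prob_space_rd_space: "prob_space (rd_space Disp)"
  unfolding rd_space_def by (rule prob_space_PiM) (simp add: prob_space_measure_pmf)

lemma measure_rd_path_first_step:
  fixes Disp :: "'k::finite \<Rightarrow> 'k pmf"
  assumes [measurable]: "Measurable.pred (PiM UNIV (\<lambda>_::nat. count_space UNIV)) P"
  shows "measure (rd_space Disp) {\<omega> \<in> space (rd_space Disp). P (rd_path y \<omega>)}
    = disp_avg Disp (\<lambda>z. measure (rd_space Disp) {\<omega> \<in> space (rd_space Disp). P (case_nat y (rd_path z \<omega>))}) y"
proof -
  let ?S = "rd_space Disp" and ?PS = "PiM UNIV (\<lambda>_::nat. count_space (UNIV::'k set))"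
  interpret prob_space ?S by (rule prob_space_rd_space)
  have [measurable]: "rd_path z \<in> measurable ?S ?PS" for z
    unfolding rd_space_def by (rule measurable_rd_path_PiM) simp
  have emeasure_eq: "emeasure ?S {\<omega> \<in> space ?S. P (g \<omega>)} = (\<integral>\<^sup>+\<omega>. indicator {x. P x} (g \<omega>) \<partial>?S)"
    if [measurable]: "g \<in> measurable ?S ?PS" for g
  proof -
    have "emeasure ?S {\<omega> \<in> space ?S. P (g \<omega>)} = (\<integral>\<^sup>+\<omega>. indicator {\<omega> \<in> space ?S. P (g \<omega>)} \<omega> \<partial>?S)"
      by (rule nn_integral_indicator[symmetric]) measurable
    also have "\<dots> = (\<integral>\<^sup>+\<omega>. indicator {x. P x} (g \<omega>) \<partial>?S)"
      by (rule nn_integral_cong) (auto simp: indicator_def)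
    finally show ?thesis .
  qed
  have "emeasure ?S {\<omega> \<in> space ?S. P (rd_path y \<omega>)} = (\<integral>\<^sup>+\<omega>. indicator {x. P x} (rd_path y \<omega>) \<partial>?S)"
    by (rule emeasure_eq) measurable
  also have "\<dots> = (\<integral>\<^sup>+s. \<integral>\<^sup>+\<omega>. indicator {x. P x} (case_nat y (rd_path (s y) \<omega>)) \<partial>?S \<partial>Pi_pmf UNIV undefined Disp)"
    unfolding rd_space_def by (rule nn_integral_rd_path_first_step) (auto simp: prob_space_measure_pmf)
  also have "\<dots> = (\<integral>\<^sup>+z. \<integral>\<^sup>+\<omega>. indicator {x. P x} (case_nat y (rd_path z \<omega>)) \<partial>?S \<partial>Disp y)"
    using nn_integral_map_pmf[where f="\<lambda>z. \<integral>\<^sup>+\<omega>. indicator {x. P x} (case_nat y (rd_path z \<omega>)) \<partial>?S"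
        and g="\<lambda>s. s y" and M="Pi_pmf UNIV undefined Disp"]
    by (simp add: Pi_pmf_component)
  also have "\<dots> = (\<integral>\<^sup>+z. measure ?S {\<omega> \<in> space ?S. P (case_nat y (rd_path z \<omega>))} \<partial>Disp y)"
    by (simp add: emeasure_eq[symmetric] emeasure_eq_measure)
  also have "\<dots> = disp_avg Disp (\<lambda>z. measure ?S {\<omega> \<in> space ?S. P (case_nat y (rd_path z \<omega>))}) y"
    by (simp add: nn_integral_measure_pmf nn_integral_count_space_finite disp_avg_def
        sum_ennreal[symmetric] ennreal_mult)
  finally show ?thesis by (simp add: emeasure_eq_measure disp_avg_nonneg)
qed

definition first_hit :: "'k \<Rightarrow> nat \<Rightarrow> (nat \<Rightarrow> 'k) \<Rightarrow> bool" where
  "first_hit i0 k x \<longleftrightarrow> x k = i0 \<and> (\<forall>t<k. x t \<noteq> i0)"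

definition exit_return :: "'k \<Rightarrow> nat \<Rightarrow> (nat \<Rightarrow> 'k) \<Rightarrow> bool" where
  "exit_return i0 k x \<longleftrightarrow>
     (\<exists>s. x s \<noteq> i0 \<and> (\<forall>t<s. x t = i0) \<and> x (s + k) = i0 \<and> (\<forall>t<k. x (s + t) \<noteq> i0))"

lemma pred_first_hit [measurable]:
  "Measurable.pred (PiM UNIV (\<lambda>_::nat. count_space UNIV)) (first_hit i0 k)"
  unfolding first_hit_def by measurable

lemma pred_exit_return [measurable]:
  "Measurable.pred (PiM UNIV (\<lambda>_::nat. count_space UNIV)) (exit_return i0 k)"
  unfolding exit_return_def by measurable

lemma exit_return_case_nat_self: "exit_return i0 k (case_nat i0 x) \<longleftrightarrow> exit_return i0 k x"
proof
  assume "exit_return i0 k (case_nat i0 x)"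
  then obtain s where s: "case_nat i0 x s \<noteq> i0" "\<forall>t<s. case_nat i0 x t = i0"
    "case_nat i0 x (s + k) = i0" "\<forall>t<k. case_nat i0 x (s + t) \<noteq> i0"
    unfolding exit_return_def by blast
  then obtain s' where s': "s = Suc s'" by (cases s) auto
  show "exit_return i0 k x"
    unfolding exit_return_def
  proof (intro exI[of _ s'] conjI allI impI)
    fix t
    show "t < s' \<Longrightarrow> x t = i0" using s(2) s' by (auto dest: spec[of _ "Suc t"])
    show "t < k \<Longrightarrow> x (s' + t) \<noteq> i0" using s(4) s' by (auto dest: spec[of _ t])
  qed (use s s' in auto)
next
  assume "exit_return i0 k x"
  then obtain s where s: "x s \<noteq> i0" "\<forall>t<s. x t = i0" "x (s + k) = i0" "\<forall>t<k. x (s + t) \<noteq> i0"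
    unfolding exit_return_def by blast
  show "exit_return i0 k (case_nat i0 x)"
    unfolding exit_return_def
  proof (intro exI[of _ "Suc s"] conjI allI impI)
    fix t assume "t < Suc s" then show "case_nat i0 x t = i0" using s(2) by (cases t) auto
  qed (use s in auto)
qed

lemma exit_return_iff_first_hit: "x 0 \<noteq> i0 \<Longrightarrow> exit_return i0 k x \<longleftrightarrow> first_hit i0 k x"
  unfolding exit_return_def first_hit_def by (metis add_0 gr_zeroI not_less0)

definition hitting_prob :: "('k::finite \<Rightarrow> 'k pmf) \<Rightarrow> 'k \<Rightarrow> 'k \<Rightarrow> nat \<Rightarrow> real" where
  "hitting_prob Disp i0 j k = measure (rd_space Disp) {\<omega> \<in> space (rd_space Disp). first_hit i0 k (rd_path j \<omega>)}"

lemma hitting_prob_bounds: "0 \<le> hitting_prob Disp i0 j k" "hitting_prob Disp i0 j k \<le> 1"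
proof -
  interpret prob_space "rd_space Disp" by (rule prob_space_rd_space)
  show "0 \<le> hitting_prob Disp i0 j k" "hitting_prob Disp i0 j k \<le> 1" unfolding hitting_prob_def by auto
qed

lemma hitting_prob_0: "hitting_prob Disp i0 j 0 = (if j = i0 then 1 else 0)"
proof -
  interpret prob_space "rd_space Disp" by (rule prob_space_rd_space)
  show ?thesis unfolding hitting_prob_def first_hit_def by (auto simp: prob_space)
qed

lemma hitting_prob_self_Suc: "hitting_prob Disp i0 i0 (Suc k) = 0"
proof -
  have "\<not> first_hit i0 (Suc k) (rd_path i0 \<omega>)" for \<omega>
    unfolding first_hit_def by (metis rd_path.simps(1) zero_less_Suc)
  then show ?thesis unfolding hitting_prob_def by simp
qed

lemma hitting_prob_Suc:
  assumes "j \<noteq> i0"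
  shows "hitting_prob Disp i0 j (Suc k) = disp_avg Disp (\<lambda>z. hitting_prob Disp i0 z k) j"
proof -
  have "first_hit i0 (Suc k) (case_nat j x) \<longleftrightarrow> first_hit i0 k x" for x :: "nat \<Rightarrow> _"
    unfolding first_hit_def using assms by (auto simp: less_Suc_eq_0_disj)
  then show ?thesis
    unfolding hitting_prob_def by (subst measure_rd_path_first_step) simp_all
qed

lemma return_prob_bounds: "0 \<le> return_prob Disp i0 k" "return_prob Disp i0 k \<le> 1"
proof -
  interpret prob_space "rd_space Disp" by (rule prob_space_rd_space)
  show "0 \<le> return_prob Disp i0 k" "return_prob Disp i0 k \<le> 1" unfolding return_prob_def by auto
qed

lemma return_prob_0: "return_prob Disp i0 0 = 0"
proof -
  have "{\<omega> \<in> space (rd_space Disp). exit_return i0 0 (rd_path i0 \<omega>)} = {}"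
    unfolding exit_return_def by auto
  then show ?thesis unfolding return_prob_def exit_return_def by (metis measure_empty)
qed

lemma return_prob_first_step:
  "return_prob Disp i0 k
     = disp_avg Disp (\<lambda>z. if z = i0 then return_prob Disp i0 k else hitting_prob Disp i0 z k) i0"
proof -
  have "return_prob Disp i0 k
      = measure (rd_space Disp) {\<omega> \<in> space (rd_space Disp). exit_return i0 k (rd_path i0 \<omega>)}"
    unfolding return_prob_def exit_return_def ..
  also have "\<dots> = disp_avg Disp
      (\<lambda>z. measure (rd_space Disp) {\<omega> \<in> space (rd_space Disp). exit_return i0 k (rd_path z \<omega>)}) i0"
    by (subst measure_rd_path_first_step) (simp_all add: exit_return_case_nat_self)
  also have "(\<lambda>z. measure (rd_space Disp) {\<omega> \<in> space (rd_space Disp). exit_return i0 k (rd_path z \<omega>)})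
      = (\<lambda>z. if z = i0 then return_prob Disp i0 k else hitting_prob Disp i0 z k)"
    by (auto simp: return_prob_def exit_return_def[symmetric] hitting_prob_def exit_return_iff_first_hit)
  finally show ?thesis .
qed

definition hitting_gf :: "('k::finite \<Rightarrow> 'k pmf) \<Rightarrow> 'k \<Rightarrow> real \<Rightarrow> 'k \<Rightarrow> real" where
  "hitting_gf Disp i0 \<mu> j = (\<Sum>k. hitting_prob Disp i0 j k * \<mu> ^ k)"

lemma summable_hitting_gf: "\<bar>\<mu>\<bar> < 1 \<Longrightarrow> summable (\<lambda>k. hitting_prob Disp i0 j k * \<mu> ^ k)"
proof (rule summable_comparison_test'[where g="\<lambda>k. \<bar>\<mu>\<bar> ^ k" and N=0])
  show "norm (hitting_prob Disp i0 j k * \<mu> ^ k) \<le> \<bar>\<mu>\<bar> ^ k" for k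
    using hitting_prob_bounds[of Disp i0 j k]
    by (simp add: abs_mult power_abs mult_left_le_one_le)
qed simp

lemma hitting_gf_nonneg: "0 \<le> \<mu> \<Longrightarrow> \<mu> < 1 \<Longrightarrow> 0 \<le> hitting_gf Disp i0 \<mu> j"
  unfolding hitting_gf_def using hitting_prob_bounds
  by (intro suminf_nonneg summable_hitting_gf mult_nonneg_nonneg zero_le_power) auto

lemma hitting_gf_self [simp]: "hitting_gf Disp i0 \<mu> i0 = 1"
proof -
  have "hitting_prob Disp i0 i0 k * \<mu> ^ k = (if k = 0 then 1 else 0)" for k
    by (cases k) (simp_all add: hitting_prob_0 hitting_prob_self_Suc)
  then show ?thesis
    unfolding hitting_gf_def using sums_single[of 0 "\<lambda>_. 1::real"] by (simp add: sums_iff)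
qed

lemma hitting_gf_step:
  assumes "j \<noteq> i0" "\<bar>\<mu>\<bar> < 1"
  shows "hitting_gf Disp i0 \<mu> j = \<mu> * disp_avg Disp (hitting_gf Disp i0 \<mu>) j"
proof -
  let ?h = "\<lambda>z k. hitting_prob Disp i0 z k * \<mu> ^ k"
  have "hitting_gf Disp i0 \<mu> j = (\<Sum>k. ?h j (Suc k))"
    unfolding hitting_gf_def using suminf_split_head[OF summable_hitting_gf[OF assms(2)], of Disp i0 j] assms(1)
    by (simp add: hitting_prob_0)
  also have "\<dots> = (\<Sum>k. \<Sum>z\<in>UNIV. \<mu> * pmf (Disp j) z * ?h z k)"
    using assms(1) by (simp add: hitting_prob_Suc disp_avg_def sum_distrib_left sum_distrib_right algebra_simps)
  also have "\<dots> = (\<Sum>z\<in>UNIV. \<Sum>k. \<mu> * pmf (Disp j) z * ?h z k)"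
    using assms(2) by (intro suminf_sum summable_mult summable_hitting_gf)
  also have "\<dots> = \<mu> * disp_avg Disp (hitting_gf Disp i0 \<mu>) j"
    unfolding disp_avg_def hitting_gf_def sum_distrib_left
    using assms(2) by (intro sum.cong refl) (simp add: suminf_mult summable_hitting_gf mult.assoc)
  finally show ?thesis .
qed

lemma isCont_hitting_gf:
  assumes "\<bar>\<mu>\<bar> < 1"
  shows "isCont (\<lambda>\<mu>. hitting_gf Disp i0 \<mu> j) \<mu>"
proof -
  have "summable (\<lambda>k. hitting_prob Disp i0 j k * ((1 + \<bar>\<mu>\<bar>) / 2) ^ k)"
    using assms by (intro summable_hitting_gf) auto
  then show ?thesis
    unfolding hitting_gf_def by (rule isCont_powser) (use assms in auto)
qed

lemma le_hitting_gf_mult: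
  assumes \<mu>: "0 \<le> \<mu>" "\<mu> < 1" and t: "\<And>z. 0 \<le> t z" "\<And>z. t z \<le> 1"
    and sub: "\<And>z. z \<noteq> i0 \<Longrightarrow> t z \<le> \<mu> * disp_avg Disp t z"
  shows "t j \<le> hitting_gf Disp i0 \<mu> j * t i0"
proof -
  define P where "P n z = (\<Sum>k<n. hitting_prob Disp i0 z k * \<mu> ^ k)" for n z
  have P_Suc: "P (Suc n) z = \<mu> * disp_avg Disp (P n) z" if "z \<noteq> i0" for n z
  proof -
    have "P (Suc n) z = (\<Sum>k<n. \<Sum>y\<in>UNIV. \<mu> * (pmf (Disp z) y * (hitting_prob Disp i0 y k * \<mu> ^ k)))"
      unfolding P_def sum.lessThan_Suc_shift using that
      by (simp add: hitting_prob_0 hitting_prob_Suc disp_avg_def sum_distrib_left sum_distrib_right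
          algebra_simps)
    also have "\<dots> = \<mu> * disp_avg Disp (P n) z"
      unfolding P_def disp_avg_def by (subst sum.swap) (simp add: sum_distrib_left)
    finally show ?thesis .
  qed
  have P_self: "P (Suc n) i0 = 1" for n
    unfolding P_def sum.lessThan_Suc_shift by (simp add: hitting_prob_0 hitting_prob_self_Suc)
  have bound: "t z \<le> \<mu> ^ n + t i0 * P n z" for n z
  proof (induction n arbitrary: z)
    case 0
    then show ?case using t by (simp add: P_def)
  next
    case (Suc n)
    show ?case
    proof (cases "z = i0")
      case True
      then show ?thesis using P_self \<mu> by simp
    next
      case False
      have "t z \<le> \<mu> * disp_avg Disp t z"
        by (rule sub[OF False])
      also have "\<dots> \<le> \<mu> * disp_avg Disp (\<lambda>y. \<mu> ^ n + t i0 * P n y) z"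
        using \<mu> Suc by (intro mult_left_mono disp_avg_mono) auto
      also have "\<dots> = \<mu> ^ Suc n + t i0 * P (Suc n) z"
        by (simp add: disp_avg_affine P_Suc[OF False] algebra_simps)
      finally show ?thesis .
    qed
  qed
  have "P n j \<le> hitting_gf Disp i0 \<mu> j" for n
    unfolding P_def hitting_gf_def using hitting_prob_bounds \<mu>
    by (intro sum_le_suminf summable_hitting_gf mult_nonneg_nonneg zero_le_power) auto
  then have "t j \<le> \<mu> ^ n + t i0 * hitting_gf Disp i0 \<mu> j" for n
    using bound[of j n] t(1)[of i0] by (meson add_left_mono mult_left_mono order_trans)
  moreover have "(\<lambda>n. \<mu> ^ n + t i0 * hitting_gf Disp i0 \<mu> j) \<longlonglongrightarrow> 0 + t i0 * hitting_gf Disp i0 \<mu> j"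
    using \<mu> by (intro tendsto_add tendsto_const LIMSEQ_power_zero) auto
  ultimately show ?thesis
    by (intro LIMSEQ_le_const[where X="\<lambda>n. \<mu> ^ n + t i0 * hitting_gf Disp i0 \<mu> j"]) (auto simp: mult.commute)
qed

lemma exit_prob_mult_return_prob:
  "(\<Sum>j\<in>UNIV - {i0}. pmf (Disp i0) j) * return_prob Disp i0 k
     = (\<Sum>z\<in>UNIV - {i0}. pmf (Disp i0) z * hitting_prob Disp i0 z k)"
proof -
  have "return_prob Disp i0 k
      = pmf (Disp i0) i0 * return_prob Disp i0 k + (\<Sum>z\<in>UNIV - {i0}. pmf (Disp i0) z * hitting_prob Disp i0 z k)"
    by (subst return_prob_first_step) (auto simp: disp_avg_remove[of _ _ _ i0] intro!: sum.cong)
  then show ?thesis by (simp add: pmf_eq_1_minus_sum_others[of "Disp i0" i0] algebra_simps)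
qed

lemma summable_return_prob: "\<bar>\<mu>\<bar> < 1 \<Longrightarrow> summable (\<lambda>k. return_prob Disp i0 k * \<mu> ^ k)"
proof (rule summable_comparison_test'[where g="\<lambda>k. \<bar>\<mu>\<bar> ^ k" and N=0])
  show "norm (return_prob Disp i0 k * \<mu> ^ k) \<le> \<bar>\<mu>\<bar> ^ k" for k
    using return_prob_bounds[of Disp i0 k]
    by (simp add: abs_mult power_abs mult_left_le_one_le)
qed simp

lemma disp_avg_hitting_gf_self:
  assumes "\<bar>m\<bar> < 1"
  shows "disp_avg Disp (hitting_gf Disp i0 m) i0 = pmf (Disp i0) i0
    + (\<Sum>j\<in>UNIV - {i0}. pmf (Disp i0) j) * (\<Sum>k. m ^ Suc k * return_prob Disp i0 (Suc k))"
proof -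
  let ?p = "\<Sum>j\<in>UNIV - {i0}. pmf (Disp i0) j"
  have "(\<Sum>z\<in>UNIV - {i0}. pmf (Disp i0) z * hitting_gf Disp i0 m z)
      = (\<Sum>z\<in>UNIV - {i0}. \<Sum>k. pmf (Disp i0) z * (hitting_prob Disp i0 z k * m ^ k))"
    unfolding hitting_gf_def using assms by (intro sum.cong refl suminf_mult[symmetric] summable_hitting_gf)
  also have "\<dots> = (\<Sum>k. \<Sum>z\<in>UNIV - {i0}. pmf (Disp i0) z * (hitting_prob Disp i0 z k * m ^ k))"
    using assms by (intro suminf_sum[symmetric] summable_mult summable_hitting_gf)
  also have "\<dots> = (\<Sum>k. ?p * (return_prob Disp i0 k * m ^ k))"
  proof (rule suminf_cong)
    fix k
    have "(\<Sum>z\<in>UNIV - {i0}. pmf (Disp i0) z * (hitting_prob Disp i0 z k * m ^ k))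
        = (\<Sum>z\<in>UNIV - {i0}. pmf (Disp i0) z * hitting_prob Disp i0 z k) * m ^ k"
      by (simp add: sum_distrib_right mult.assoc)
    then show "(\<Sum>z\<in>UNIV - {i0}. pmf (Disp i0) z * (hitting_prob Disp i0 z k * m ^ k))
        = ?p * (return_prob Disp i0 k * m ^ k)"
      by (simp add: exit_prob_mult_return_prob[symmetric] mult.assoc)
  qed
  also have "\<dots> = ?p * (\<Sum>k. return_prob Disp i0 k * m ^ k)"
    using assms by (intro suminf_mult summable_return_prob)
  also have "(\<Sum>k. return_prob Disp i0 k * m ^ k) = (\<Sum>k. m ^ Suc k * return_prob Disp i0 (Suc k))"
    using suminf_split_head[OF summable_return_prob[OF assms], of Disp i0]
    by (simp add: return_prob_0 mult.commute)
  finally show ?thesis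
    by (simp add: disp_avg_remove[of _ _ _ i0])
qed

section \<open>The persistence criterion\<close>

lemma eventually_offspring_gf_one_minus_le:
  assumes v: "\<And>j. 0 \<le> v j" and c: "\<And>j. v j = c j * disp_avg Disp v j"
    and lower: "\<And>j. \<forall>\<^sub>F x in at_right 0. c j * x \<le> 1 - pgf (N j) (1 - x)"
  shows "\<forall>\<^sub>F \<epsilon> in at_right 0. \<forall>j. \<epsilon> * v j \<le> 1 \<and> offspring_gf N Disp (\<lambda>i. 1 - \<epsilon> * v i) j \<le> 1 - \<epsilon> * v j"
proof -
  have "\<forall>\<^sub>F \<epsilon> in at_right 0. pgf (N j) (1 - \<epsilon> * disp_avg Disp v j) \<le> 1 - \<epsilon> * v j" for j
  proof (cases "disp_avg Disp v j = 0")
    case True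
    then show ?thesis using c[of j] by simp
  next
    case False
    then have "0 < disp_avg Disp v j" using disp_avg_nonneg[OF v] by (simp add: order_less_le)
    then have "filterlim (\<lambda>\<epsilon>. \<epsilon> * disp_avg Disp v j) (at_right 0) (at_right 0)"
      by (intro tendsto_imp_filterlim_at_right tendsto_eq_intros)
        (auto intro: eventually_mono[OF eventually_at_right_less])
    from eventually_compose_filterlim[OF lower[of j] this] show ?thesis
      by eventually_elim (simp add: c[of j, symmetric] mult.commute mult.left_commute)
  qed
  moreover have "\<forall>\<^sub>F \<epsilon> in at_right 0. \<epsilon> * v j \<le> 1" for j
  proof -
    have "((\<lambda>\<epsilon>. \<epsilon> * v j) \<longlongrightarrow> 0) (at_right 0)"
      by (intro tendsto_eq_intros) auto
    then show ?thesis by (rule eventually_mono[OF order_tendstoD(2)[where a=1]]) auto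
  qed
  moreover have "offspring_gf N Disp (\<lambda>i. 1 - \<epsilon> * v i) j = pgf (N j) (1 - \<epsilon> * disp_avg Disp v j)" for \<epsilon> j
    using disp_avg_affine[of Disp 1 "- \<epsilon>" v j] by (simp add: offspring_gf_def)
  ultimately show ?thesis
    by (intro eventually_all_finite) (simp add: eventually_conj_iff)
qed

lemma growth_gt_1_if_extinction_lt_1:
  assumes A2: "\<And>i. integrable (measure_pmf (N i)) real"
    and hM: "measure_pmf.expectation (N i0) real = M" and M1: "M > 1"
    and hm: "\<And>i. i \<noteq> i0 \<Longrightarrow> measure_pmf.expectation (N i) real = m" and m: "0 \<le> m" "m < 1"
    and q: "extinction_prob N Disp i0 < 1"
  shows "1 < M * disp_avg Disp (hitting_gf Disp i0 m) i0"
proof -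
  define t where "t i = 1 - extinction_prob N Disp i" for i
  have t: "0 \<le> t i" "t i \<le> 1" for i
    unfolding t_def using extinction_prob_bounds[of N Disp i] by auto
  have Dt: "0 \<le> disp_avg Disp t i" "disp_avg Disp t i \<le> 1" for i
    using t by (auto intro: disp_avg_nonneg disp_avg_le_1)
  have "t i = 1 - pgf (N i) (1 - disp_avg Disp t i)" for i
    using offspring_gf_extinction_prob[of N Disp i] disp_avg_affine[of Disp 1 "- 1" t i]
    by (simp add: t_def offspring_gf_def)
  then have t_le: "t i \<le> measure_pmf.expectation (N i) real * disp_avg Disp t i" and
    t_i0_less: "0 < disp_avg Disp t i0 \<Longrightarrow> t i0 < M * disp_avg Disp t i0" for i
    using one_minus_pgf_le[OF A2 Dt] one_minus_pgf_less[OF A2, of i0] Dt hM M1 by auto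
  have "t j \<le> hitting_gf Disp i0 m j * t i0" for j
    using m t by (rule le_hitting_gf_mult) (use t_le hm in auto)
  then have Dt_le: "disp_avg Disp t i0 \<le> t i0 * disp_avg Disp (hitting_gf Disp i0 m) i0"
    using disp_avg_mono[of t "\<lambda>j. t i0 * hitting_gf Disp i0 m j" Disp i0]
    by (simp add: disp_avg_cmult mult.commute)
  have "0 < t i0" using q by (simp add: t_def)
  then have "0 < disp_avg Disp t i0"
    using t_le[of i0] Dt[of i0] hM by (auto simp: order_less_le)
  then have "t i0 < M * disp_avg Disp t i0"
    by (rule t_i0_less)
  also have "\<dots> \<le> M * (t i0 * disp_avg Disp (hitting_gf Disp i0 m) i0)"
    using Dt_le M1 by (intro mult_left_mono) auto
  finally show ?thesis
    using \<open>0 < t i0\<close> by (simp add: algebra_simps)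
qed

text \<open>The strict inequality \<mu> < m leaves room for eventually_one_minus_pgf_ge away from i0;
  the alternative \<mu> = 0 covers the degenerate case m = 0.\<close>

lemma exists_hitting_gf_below:
  assumes m: "0 \<le> m" "m < 1" and growth: "1 < M * disp_avg Disp (hitting_gf Disp i0 m) i0"
  obtains \<mu> where "0 \<le> \<mu>" "\<mu> \<le> m" "\<mu> < m \<or> \<mu> = 0" "1 < M * disp_avg Disp (hitting_gf Disp i0 \<mu>) i0"
proof (cases "m = 0")
  case False
  have "isCont (\<lambda>\<mu>. M * disp_avg Disp (hitting_gf Disp i0 \<mu>) i0) m"
    unfolding disp_avg_def using m by (intro continuous_intros isCont_hitting_gf) auto
  then have "((\<lambda>\<mu>. M * disp_avg Disp (hitting_gf Disp i0 \<mu>) i0) \<longlongrightarrow> M * disp_avg Disp (hitting_gf Disp i0 m) i0) (at_left m)"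
    unfolding isCont_def by (rule tendsto_within_subset) simp
  then have "\<forall>\<^sub>F \<mu> in at_left m. 1 < M * disp_avg Disp (hitting_gf Disp i0 \<mu>) i0"
    using growth by (rule order_tendstoD(1))
  moreover have "\<forall>\<^sub>F \<mu> in at_left m. 0 < \<mu> \<and> \<mu> < m"
    using m False by (auto simp: eventually_at_left_field intro!: exI[of _ 0])
  ultimately have "\<forall>\<^sub>F \<mu> in at_left m. 1 < M * disp_avg Disp (hitting_gf Disp i0 \<mu>) i0 \<and> 0 < \<mu> \<and> \<mu> < m"
    by (rule eventually_conj)
  then obtain \<mu> where "1 < M * disp_avg Disp (hitting_gf Disp i0 \<mu>) i0" "0 < \<mu>" "\<mu> < m"
    using eventually_happens'[OF trivial_limit_at_left_real] by blast
  then show ?thesis by (intro that[of \<mu>]) auto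
qed (use that growth in auto)

lemma extinction_lt_1_if_growth_gt_1:
  assumes A2: "\<And>i. integrable (measure_pmf (N i)) real"
    and hM: "measure_pmf.expectation (N i0) real = M"
    and hm: "\<And>i. i \<noteq> i0 \<Longrightarrow> measure_pmf.expectation (N i) real = m" and m: "0 \<le> m" "m < 1"
    and growth: "1 < M * disp_avg Disp (hitting_gf Disp i0 m) i0"
  shows "extinction_prob N Disp i0 < 1"
proof -
  obtain \<mu> where \<mu>: "0 \<le> \<mu>" "\<mu> \<le> m" "\<mu> < m \<or> \<mu> = 0"
    and growth_\<mu>: "1 < M * disp_avg Disp (hitting_gf Disp i0 \<mu>) i0"
    using exists_hitting_gf_below[OF m growth] .
  define v where "v = hitting_gf Disp i0 \<mu>"
  define c where "c j = (if j = i0 then 1 / disp_avg Disp v i0 else \<mu>)" for j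
  have v: "0 \<le> v j" for j
    unfolding v_def using \<mu> m by (intro hitting_gf_nonneg) auto
  have Dv: "0 < disp_avg Disp v i0"
    using growth_\<mu> disp_avg_nonneg[of v Disp i0] v by (force simp: v_def order_less_le)
  then have c_i0: "1 / disp_avg Disp v i0 < M"
    using growth_\<mu> by (simp add: v_def field_simps)
  have c: "v j = c j * disp_avg Disp v j" for j
    using Dv \<mu> m hitting_gf_step[of j i0 \<mu> Disp] by (simp add: c_def v_def)
  have lower: "\<forall>\<^sub>F x in at_right 0. c j * x \<le> 1 - pgf (N j) (1 - x)" for j
  proof (cases "j \<noteq> i0 \<and> \<mu> = 0")
    case True
    have "\<forall>\<^sub>F x in at_right 0. 0 < x \<and> x < (1::real)"
      by (auto simp: eventually_at_right_field intro!: exI[of _ 1])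
    then show ?thesis
      by eventually_elim (use True in \<open>simp add: c_def pgf_le_1\<close>)
  next
    case False
    then have "c j < measure_pmf.expectation (N j) real"
      using c_i0 \<mu> hM hm[of j] by (auto simp: c_def)
    then show ?thesis by (rule eventually_one_minus_pgf_ge[OF A2])
  qed
  have "\<forall>\<^sub>F \<epsilon> in at_right 0. 0 < \<epsilon> \<and>
      (\<forall>j. \<epsilon> * v j \<le> 1 \<and> offspring_gf N Disp (\<lambda>i. 1 - \<epsilon> * v i) j \<le> 1 - \<epsilon> * v j)"
    using eventually_at_right_less eventually_offspring_gf_one_minus_le[OF v c lower]
    by (rule eventually_conj)
  then obtain \<epsilon> where \<epsilon>: "0 < \<epsilon>"
    "\<And>j. \<epsilon> * v j \<le> 1" "\<And>j. offspring_gf N Disp (\<lambda>i. 1 - \<epsilon> * v i) j \<le> 1 - \<epsilon> * v j"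
    using eventually_happens'[OF trivial_limit_at_right_real] by blast
  have "extinction_prob N Disp i0 \<le> 1 - \<epsilon> * v i0"
    using \<epsilon> v by (intro extinction_prob_le) (auto simp: mult_nonneg_nonneg)
  then show ?thesis using \<epsilon>(1) by (simp add: v_def)
qed

lemma extinction_prob_lt_1_iff:
  assumes A2: "\<And>i. integrable (measure_pmf (N i)) real"
    and hM: "measure_pmf.expectation (N i0) real = M" and M1: "M > 1"
    and hm: "\<And>i. i \<noteq> i0 \<Longrightarrow> measure_pmf.expectation (N i) real = m" and m: "0 \<le> m" "m < 1"
  shows "extinction_prob N Disp i0 < 1 \<longleftrightarrow> 1 < M * disp_avg Disp (hitting_gf Disp i0 m) i0"
proof
  show "1 < M * disp_avg Disp (hitting_gf Disp i0 m) i0" if "extinction_prob N Disp i0 < 1"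
    using A2 hM M1 hm m that by (rule growth_gt_1_if_extinction_lt_1)
  show "extinction_prob N Disp i0 < 1" if "1 < M * disp_avg Disp (hitting_gf Disp i0 m) i0"
    using A2 hM hm m that by (rule extinction_lt_1_if_growth_gt_1)
qed

theorem proposition3p2:
  fixes N :: "'k::finite \<Rightarrow> nat pmf" and Disp :: "'k \<Rightarrow> 'k pmf" and i0 :: 'k
    and M m p e :: real
  assumes K2: "CARD('k) \<ge> 2"
    and A1: "pmf (N i0) 1 < 1"
    and A2: "\<And>i. integrable (measure_pmf (N i)) real"
    and A4: "\<And>i j. (i, j) \<in> {(a, b). pmf (Disp a) b > 0}\<^sup>+"
    and hM: "measure_pmf.expectation (N i0) real = M" and M1: "M > 1"
    and hm: "\<And>i. i \<noteq> i0 \<Longrightarrow> measure_pmf.expectation (N i) real = m" and m1: "m < 1"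
    and hp: "p = (\<Sum>j\<in>UNIV - {i0}. pmf (Disp i0) j)"
    and he: "e = (\<Sum>k. m ^ Suc k * return_prob Disp i0 (Suc k))"
  shows "persist_prob N Disp (unit_vec i0) > 0 \<longleftrightarrow> M * (1 - p) + e * M * p > 1"
proof -
  obtain i where "i \<noteq> i0"
    using K2 card_mono[of "{i0}" UNIV] by force
  have "0 \<le> measure_pmf.expectation (N i) real"
    by (rule integral_nonneg_AE) simp
  with hm[OF \<open>i \<noteq> i0\<close>] have m0: "0 \<le> m" by simp
  have growth_eq: "disp_avg Disp (hitting_gf Disp i0 m) i0 = 1 - p + p * e"
    using disp_avg_hitting_gf_self[of m Disp i0] m0 m1
    by (simp add: hp he pmf_eq_1_minus_sum_others[of "Disp i0" i0])
  have "M * (1 - p) + e * M * p = M * disp_avg Disp (hitting_gf Disp i0 m) i0"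
    unfolding growth_eq by (simp add: algebra_simps)
  then show ?thesis
    using extinction_prob_lt_1_iff[where N=N and Disp=Disp, OF A2 hM M1 hm m0 m1] by (simp add: persist_prob_unit_vec)
qed

end
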